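(* Let $g\in\mathscr{B}$ and, for $\lambda\in\mathbb{D}\setminus\{0\}$ and $\gamma>0$, let $f_{\gamma,\lambda}(z)=\dfrac{z}{(1-\bar\lambda z)^\gamma}$, $z\in\mathbb{D}$. Then: (a) For every $k\in\mathbb{N}$ and $t\in[0,1]$, \[ |T_g^kf_{\gamma,\lambda}(t\lambda)|\le\frac{\|g\|_{\mathscr{B}}^k}{|\lambda|^k\gamma^k(1-t|\lambda|^2)^\gamma}. \] (b) If $a_0,\dots,a_n\in\mathbb{C}$ and $\gamma|\lambda|>\|g\|_{\mathscr{B}}$, then \[ \Bigl|\sum_{k=0}^na_kT_g^kf_{\gamma,\lambda}(\lambda)\Bigr|\le|a_0|\frac{|\lambda|}{(1-|\lambda|^2)^\gamma}+\Bigl(\sum_{k=1}^n|a_k|\Bigr)\frac{\|g\|_{\mathscr{B}}}{|\lambda|\gamma(1-|\lambda|^2)^\gamma}. \]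
   Context: $\mathbb{D}$ is the unit disc. $\mathscr{B}$ is the Bloch space of analytic $g$ on $\mathbb{D}$ with $\|g\|_{\mathscr{B}}=\sup_{z\in\mathbb{D}}(1-|z|^2)|g'(z)|<\infty$. $T_gf(z)=\int_0^zf(\zeta)g'(\zeta)\,d\zeta$, $T_g^0$ is the identity. The power $(1-\bar\lambda z)^\gamma$ is defined with the principal branch of the logarithm. *)

theory Defs
  imports "HOL-Complex_Analysis.Complex_Analysis"
begin

definition bloch :: "(complex \<Rightarrow> complex) \<Rightarrow> bool" where
  "bloch g \<longleftrightarrow> g holomorphic_on ball 0 1 \<and>
     bdd_above ((\<lambda>z. (1 - (cmod z)^2) * cmod (deriv g z)) ` ball 0 1)"

definition bloch_norm :: "(complex \<Rightarrow> complex) \<Rightarrow> real" where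
  "bloch_norm g = (SUP z\<in>ball 0 1. (1 - (cmod z)^2) * cmod (deriv g z))"

definition Tg :: "(complex \<Rightarrow> complex) \<Rightarrow> (complex \<Rightarrow> complex) \<Rightarrow> complex \<Rightarrow> complex" where
  "Tg g f = (\<lambda>z. contour_integral (linepath 0 z) (\<lambda>w. f w * deriv g w))"

text \<open>f_{gamma,lambda}(z) = z / (1 - conj(lambda) z)^gamma, principal branch
  (complex powr uses the principal logarithm).\<close>
definition ftest :: "real \<Rightarrow> complex \<Rightarrow> complex \<Rightarrow> complex" where
  "ftest \<gamma> l = (\<lambda>z. z / (1 - cnj l * z) powr (of_real \<gamma>))"

end

theory Submission
  imports Defs
begin

text \<open>Write \<open>r = |\<lambda>|\<close> and \<open>B = \<parallel>g\<parallel>\<^sub>\<B>\<close>. On the radius through \<open>\<lambda>\<close> the Bloch condition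
  gives \<open>|g'(s\<lambda>)| \<le> B / (1 - s r\<^sup>2)\<close>, so a bound \<open>|h(s\<lambda>)| \<le> C (1 - s r\<^sup>2)\<^sup>-\<^sup>\<gamma>\<close> for all
  \<open>s \<in> [0,1]\<close> makes the integrand of \<open>T\<^sub>g h(t\<lambda>)\<close> along \<open>[0, t\<lambda>]\<close> at most the
  \<open>u\<close>-derivative of \<open>C B/(r\<gamma>) (1 - u t r\<^sup>2)\<^sup>-\<^sup>\<gamma>\<close>; integrating over \<open>u \<in> [0,1]\<close> yields
  \<open>|T\<^sub>g h(t\<lambda>)| \<le> C B/(r\<gamma>) (1 - t r\<^sup>2)\<^sup>-\<^sup>\<gamma>\<close>. Starting from
  \<open>|f\<^sub>\<gamma>\<^sub>,\<^sub>\<lambda>(t\<lambda>)| = t r (1 - t r\<^sup>2)\<^sup>-\<^sup>\<gamma>\<close> and iterating gives (a). In (b) the ratio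
  \<open>B/(r\<gamma>)\<close> is below 1, so every term with \<open>k \<ge> 1\<close> obeys the \<open>k = 1\<close> bound.\<close>

lemma bloch_deriv_le_bloch_norm:
  assumes "bloch g" and "z \<in> ball 0 1"
  shows "(1 - (cmod z)^2) * cmod (deriv g z) \<le> bloch_norm g"
  unfolding bloch_norm_def
  by (rule cSUP_upper[OF assms(2)]) (use assms(1) in \<open>simp add: bloch_def\<close>)

lemma bloch_norm_nonneg:
  assumes "bloch g"
  shows "0 \<le> bloch_norm g"
proof -
  have "cmod (deriv g 0) \<le> bloch_norm g"
    using bloch_deriv_le_bloch_norm[OF assms, of 0] by simp
  then show ?thesis
    by (rule order_trans[OF norm_ge_zero])
qed

lemma bloch_deriv_radial_le:
  assumes "bloch g" and "cmod lam < 1" and "s \<in> {0..1}"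
  shows "(1 - s * (cmod lam)^2) * cmod (deriv g (of_real s * lam)) \<le> bloch_norm g"
proof -
  have "s * cmod lam \<le> cmod lam"
    using assms(3) by (simp add: mult_left_le_one_le)
  then have "s * cmod lam < 1"
    using assms(2) by linarith
  then have in_disc: "of_real s * lam \<in> ball 0 1"
    using assms(3) by (simp add: norm_mult)
  have "(cmod (of_real s * lam))^2 = s^2 * (cmod lam)^2"
    using assms(3) by (simp add: norm_mult power_mult_distrib)
  also have "\<dots> \<le> s * (cmod lam)^2"
    using assms(3) by (intro mult_right_mono) (auto simp: power2_eq_square mult_left_le_one_le)
  finally have "(1 - s * (cmod lam)^2) * cmod (deriv g (of_real s * lam))
      \<le> (1 - (cmod (of_real s * lam))^2) * cmod (deriv g (of_real s * lam))"
    by (intro mult_right_mono) auto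
  also have "\<dots> \<le> bloch_norm g"
    by (rule bloch_deriv_le_bloch_norm[OF assms(1) in_disc])
  finally show ?thesis .
qed

lemma holomorphic_on_Tg:
  assumes "convex S" and "open S" and "f holomorphic_on S" and "g holomorphic_on S" and "0 \<in> S"
  shows "Tg g f holomorphic_on S"
proof -
  have "(\<lambda>w. f w * deriv g w) holomorphic_on S"
    using assms by (intro holomorphic_intros holomorphic_deriv) auto
  then obtain G where G: "\<And>z. z \<in> S \<Longrightarrow> (G has_field_derivative f z * deriv g z) (at z within S)"
    using holomorphic_convex_primitive'[OF assms(1,2)] by blast
  have "G holomorphic_on S"
    using G assms(2) by (metis at_within_open field_differentiable_def holomorphic_on_def)
  then have "(\<lambda>z. G z - G 0) holomorphic_on S"
    by (intro holomorphic_on_diff holomorphic_on_const)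
  moreover have "G z - G 0 = Tg g f z" if "z \<in> S" for z
  proof -
    have "path_image (linepath 0 z) \<subseteq> S"
      using assms(1,5) that by (simp add: closed_segment_subset)
    then have "((\<lambda>w. f w * deriv g w) has_contour_integral G z - G 0) (linepath 0 z)"
      using contour_integral_primitive[OF G] by fastforce
    then show ?thesis
      unfolding Tg_def by (rule contour_integral_unique[symmetric])
  qed
  ultimately show ?thesis
    by (rule holomorphic_transform)
qed

lemma holomorphic_on_funpow_Tg:
  assumes "convex S" and "open S" and "f holomorphic_on S" and "g holomorphic_on S" and "0 \<in> S"
  shows "((Tg g) ^^ k) f holomorphic_on S"
  by (induction k) (simp_all add: assms holomorphic_on_Tg)

lemma has_integral_Tg_linepath:
  assumes "convex S" and "open S" and "f holomorphic_on S" and "g holomorphic_on S"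
    and "0 \<in> S" and "w \<in> S"
  shows "((\<lambda>x. f (of_real x * w) * deriv g (of_real x * w) * w) has_integral Tg g f w) {0..1}"
proof -
  have "continuous_on S (\<lambda>w. f w * deriv g w)"
    using assms by (intro holomorphic_on_imp_continuous_on holomorphic_intros holomorphic_deriv)
  moreover have "closed_segment 0 w \<subseteq> S"
    using assms by (simp add: closed_segment_subset)
  ultimately have "continuous_on (closed_segment 0 w) (\<lambda>w. f w * deriv g w)"
    by (rule continuous_on_subset)
  then have "((\<lambda>w. f w * deriv g w) has_contour_integral Tg g f w) (linepath 0 w)"
    unfolding Tg_def by (intro has_contour_integral_integral contour_integrable_continuous_linepath)
  then show ?thesis
    unfolding has_contour_integral_linepath by (simp add: linepath_def scaleR_conv_of_real)
qed

lemma holomorphic_on_ftest: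
  assumes "cmod lam \<le> 1"
  shows "ftest \<gamma> lam holomorphic_on ball 0 1"
proof -
  have Re_pos: "0 < Re (1 - cnj lam * z)" if "z \<in> ball 0 1" for z
  proof -
    have "cmod (cnj lam * z) < 1"
      using assms that mult_left_le_one_le[of "cmod z" "cmod lam"] by (simp add: norm_mult)
    then have "Re (cnj lam * z) < 1"
      using complex_Re_le_cmod le_less_trans by blast
    then show ?thesis by simp
  qed
  have "(1 - cnj lam * z) powr of_real \<gamma> \<noteq> 0" if "z \<in> ball 0 1" for z
  proof -
    have "1 - cnj lam * z \<noteq> 0"
      using Re_pos[OF that] by force
    then show ?thesis by (simp add: powr_def)
  qed
  then show ?thesis
    unfolding ftest_def using Re_pos
    by (intro holomorphic_intros) (fastforce simp: complex_nonpos_Reals_iff)+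
qed

lemma ftest_radial:
  assumes "s * (cmod lam)^2 \<le> 1"
  shows "ftest \<gamma> lam (of_real s * lam) = of_real s * lam / of_real ((1 - s * (cmod lam)^2) powr \<gamma>)"
proof -
  have "1 - cnj lam * (of_real s * lam) = 1 - of_real s * (cnj lam * lam)"
    by (simp add: algebra_simps)
  also have "\<dots> = of_real (1 - s * (cmod lam)^2)"
    using complex_norm_square[of lam] by (simp add: mult.commute)
  finally have denominator: "1 - cnj lam * (of_real s * lam) = of_real (1 - s * (cmod lam)^2)" .
  have "0 \<le> 1 - s * (cmod lam)^2"
    using assms by simp
  then show ?thesis
    unfolding ftest_def by (simp only: denominator powr_of_real)
qed

lemma has_integral_powr_kernel:
  fixes c \<gamma> :: real
  assumes "c < 1"
  shows "((\<lambda>u. c * \<gamma> * (1 - u * c) powr (- \<gamma> - 1)) has_integral (1 - c) powr (- \<gamma>) - 1) {0..1}"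
proof -
  have pos: "0 < 1 - u * c" if "u \<in> {0..1}" for u
    using assms that mult_left_le_one_le[of c u] mult_nonneg_nonpos[of u c] by (cases "0 \<le> c") auto
  have "((\<lambda>u. (1 - u * c) powr (- \<gamma>)) has_real_derivative c * \<gamma> * (1 - u * c) powr (- \<gamma> - 1)) (at u)"
    if "u \<in> {0..1}" for u
    using DERIV_fun_powr[of "\<lambda>u. 1 - u * c" u "- c" "- \<gamma>"] pos[OF that]
    by (auto intro!: derivative_eq_intros simp: mult_ac)
  then have "((\<lambda>u. c * \<gamma> * (1 - u * c) powr (- \<gamma> - 1)) has_integral
      (1 - 1 * c) powr (- \<gamma>) - (1 - 0 * c) powr (- \<gamma>)) {0..1}"
    by (intro fundamental_theorem_of_calculus)
       (auto simp: has_real_derivative_iff_has_vector_derivative intro: has_vector_derivative_at_within)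
  then show ?thesis by simp
qed

lemma norm_Tg_integrand_radial_le:
  assumes g: "bloch g" and "cmod lam < 1" and s: "s \<in> {0..1}"
    and h_le: "cmod (h (of_real s * lam)) \<le> C / (1 - s * (cmod lam)^2) powr \<gamma>"
  shows "cmod (h (of_real s * lam) * deriv g (of_real s * lam))
           \<le> C * bloch_norm g * (1 - s * (cmod lam)^2) powr (- \<gamma> - 1)"
proof -
  define D where "D = 1 - s * (cmod lam)^2"
  have "s * (cmod lam)^2 \<le> (cmod lam)^2"
    using s by (simp add: mult_left_le_one_le)
  moreover have "(cmod lam)^2 < 1"
    using assms(2) by (simp add: power_less_one_iff)
  ultimately have "0 < D"
    unfolding D_def by linarith
  then have deriv_le: "cmod (deriv g (of_real s * lam)) \<le> bloch_norm g / D"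
    using bloch_deriv_radial_le[OF g assms(2) s] by (simp add: D_def field_simps mult.commute)
  have "cmod (h (of_real s * lam) * deriv g (of_real s * lam)) \<le> C / D powr \<gamma> * (bloch_norm g / D)"
    unfolding norm_mult D_def
    by (rule mult_mono[OF h_le deriv_le[unfolded D_def] order_trans[OF norm_ge_zero h_le] norm_ge_zero])
  also have "\<dots> = C * bloch_norm g * D powr (- \<gamma> - 1)"
    using \<open>0 < D\<close> by (simp add: powr_diff powr_minus divide_inverse)
  finally show ?thesis
    unfolding D_def .
qed

lemma norm_Tg_radial_le:
  assumes g: "bloch g" and h: "h holomorphic_on ball 0 1"
    and lam: "lam \<in> ball 0 1" "lam \<noteq> 0" and \<gamma>: "\<gamma> > 0"
    and h_le: "\<And>s. s \<in> {0..1} \<Longrightarrow> cmod (h (of_real s * lam)) \<le> C / (1 - s * (cmod lam)^2) powr \<gamma>"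
    and t: "t \<in> {0..1}"
  shows "cmod (Tg g h (of_real t * lam))
           \<le> C * bloch_norm g / (cmod lam * \<gamma>) / (1 - t * (cmod lam)^2) powr \<gamma>"
proof -
  define r where "r = cmod lam"
  define B where "B = bloch_norm g"
  define c where "c = t * r^2"
  define K where "K = C * B / (r * \<gamma>)"
  have r: "0 < r" "r < 1"
    using lam by (auto simp: r_def)
  have "0 \<le> B"
    using bloch_norm_nonneg[OF g] by (simp add: B_def)
  have "cmod (h 0) \<le> C"
    using h_le[of 0] by simp
  then have "0 \<le> C"
    by (rule order_trans[OF norm_ge_zero])
  then have "0 \<le> K"
    using r \<gamma> \<open>0 \<le> B\<close> by (simp add: K_def)
  have "c \<le> r^2"
    using t by (simp add: c_def mult_left_le_one_le)
  also have "r^2 < 1"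
    using r by (simp add: power_less_one_iff)
  finally have "c < 1" .
  have "t * r \<le> r"
    using t r by (simp add: mult_left_le_one_le)
  then have "t * r < 1"
    using r by linarith
  then have w: "of_real t * lam \<in> ball 0 1"
    using t by (simp add: norm_mult r_def)
  let ?F = "\<lambda>x. h (of_real x * (of_real t * lam)) * deriv g (of_real x * (of_real t * lam)) * (of_real t * lam)"
  have F_le: "norm (?F x) \<le> K * (c * \<gamma> * (1 - x * c) powr (- \<gamma> - 1))" if x: "x \<in> {0..1}" for x
  proof -
    have s: "x * t \<in> {0..1}"
      using x t by (auto intro: mult_le_one)
    have "norm (?F x) = cmod (h (of_real (x * t) * lam) * deriv g (of_real (x * t) * lam)) * (t * r)"
      using t by (simp add: norm_mult r_def mult.assoc)
    also have "\<dots> \<le> C * B * (1 - x * c) powr (- \<gamma> - 1) * (t * r)"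
      using norm_Tg_integrand_radial_le[where h = h and C = C and \<gamma> = \<gamma>, OF g _ s h_le[OF s]] lam t r
      by (intro mult_right_mono) (simp_all add: B_def c_def r_def mult.assoc)
    also have "\<dots> = K * (c * \<gamma> * (1 - x * c) powr (- \<gamma> - 1))"
      using r \<gamma> by (simp add: K_def c_def field_simps power2_eq_square)
    finally show ?thesis .
  qed
  have "g holomorphic_on ball 0 1"
    using g by (simp add: bloch_def)
  from has_integral_Tg_linepath[OF convex_ball open_ball h this _ w]
  have I_F: "(?F has_integral Tg g h (of_real t * lam)) {0..1}"
    by simp
  have I_K: "((\<lambda>x. K * (c * \<gamma> * (1 - x * c) powr (- \<gamma> - 1))) has_integral K * ((1 - c) powr (- \<gamma>) - 1)) {0..1}"
    using has_integral_powr_kernel[OF \<open>c < 1\<close>] by (rule has_integral_mult_right)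
  have "cmod (Tg g h (of_real t * lam)) \<le> K * ((1 - c) powr (- \<gamma>) - 1)"
    using integral_norm_bound_integral[OF has_integral_integrable[OF I_F] has_integral_integrable[OF I_K] F_le]
    by (simp only: integral_unique[OF I_F] integral_unique[OF I_K])
  also have "\<dots> \<le> K * (1 - c) powr (- \<gamma>)"
    using \<open>0 \<le> K\<close> by (simp add: mult_left_mono)
  finally show ?thesis
    by (simp add: K_def B_def c_def r_def powr_minus divide_inverse)
qed

lemma norm_ftest_radial_le:
  assumes "cmod lam < 1" and "t \<in> {0..1}"
  shows "cmod (ftest \<gamma> lam (of_real t * lam)) \<le> 1 / (1 - t * (cmod lam)^2) powr \<gamma>"
proof -
  have "t * (cmod lam)^2 \<le> 1"
    using assms by (intro mult_le_one) (simp_all add: power_le_one)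
  have "t * cmod lam \<le> 1"
    using assms by (intro mult_le_one) simp_all
  have "cmod (ftest \<gamma> lam (of_real t * lam)) = t * cmod lam / (1 - t * (cmod lam)^2) powr \<gamma>"
    using assms(2) by (simp add: ftest_radial[OF \<open>t * (cmod lam)^2 \<le> 1\<close>] norm_mult norm_divide)
  also have "\<dots> \<le> 1 / (1 - t * (cmod lam)^2) powr \<gamma>"
    using \<open>t * cmod lam \<le> 1\<close> by (simp add: divide_right_mono)
  finally show ?thesis .
qed

lemma norm_funpow_Tg_ftest_radial_le:
  assumes g: "bloch g" and lam: "lam \<in> ball 0 1" "lam \<noteq> 0" and \<gamma>: "\<gamma> > 0"
    and "t \<in> {0..1}"
  shows "cmod (((Tg g) ^^ k) (ftest \<gamma> lam) (of_real t * lam))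
           \<le> (bloch_norm g / (cmod lam * \<gamma>)) ^ k / (1 - t * (cmod lam)^2) powr \<gamma>"
  using \<open>t \<in> {0..1}\<close>
proof (induction k arbitrary: t)
  case 0
  then show ?case
    using norm_ftest_radial_le lam by simp
next
  case (Suc k)
  have "g holomorphic_on ball 0 1"
    using g by (simp add: bloch_def)
  then have "((Tg g) ^^ k) (ftest \<gamma> lam) holomorphic_on ball 0 1"
    using lam by (intro holomorphic_on_funpow_Tg holomorphic_on_ftest) auto
  from norm_Tg_radial_le[OF g this lam \<gamma> Suc.IH Suc.prems]
  show ?case
    by (simp add: mult.commute)
qed

lemma norm_sum_le_first_plus_tail:
  fixes a x :: "nat \<Rightarrow> 'a::real_normed_div_algebra"
  assumes x_le: "\<And>k. k \<ge> 1 \<Longrightarrow> norm (x k) \<le> \<rho> ^ k * M"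
    and "0 \<le> \<rho>" and "\<rho> \<le> 1" and "0 \<le> M"
  shows "norm (\<Sum>k=0..n. a k * x k) \<le> norm (a 0) * norm (x 0) + (\<Sum>k=1..n. norm (a k)) * (\<rho> * M)"
proof -
  have tail_le: "norm (a k * x k) \<le> norm (a k) * (\<rho> * M)" if "k \<in> {1..n}" for k
  proof -
    have "\<rho> ^ k \<le> \<rho>"
      using assms that power_decreasing[of 1 k \<rho>] by simp
    then have "norm (x k) \<le> \<rho> * M"
      using x_le[of k] that \<open>0 \<le> M\<close> by (meson atLeastAtMost_iff mult_right_mono order_trans)
    then show ?thesis
      by (simp add: norm_mult mult_left_mono)
  qed
  have "norm (\<Sum>k=0..n. a k * x k) \<le> norm (a 0 * x 0) + norm (\<Sum>k=1..n. a k * x k)"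
    by (simp add: sum.atLeast_Suc_atMost norm_triangle_ineq)
  also have "norm (\<Sum>k=1..n. a k * x k) \<le> (\<Sum>k=1..n. norm (a k) * (\<rho> * M))"
    using norm_sum order_trans sum_mono tail_le by (metis (no_types, lifting))
  finally show ?thesis
    by (simp add: norm_mult sum_distrib_right)
qed

theorem lemma4p11:
  fixes g :: "complex \<Rightarrow> complex" and \<gamma> :: real and lam :: complex
  assumes "bloch g" and "lam \<in> ball 0 1" and "lam \<noteq> 0" and "\<gamma> > 0"
  shows "(\<forall>(k::nat) (t::real). t \<in> {0..1} \<longrightarrow>
            cmod (((Tg g) ^^ k) (ftest \<gamma> lam) (of_real t * lam))
              \<le> bloch_norm g ^ k /
                 (cmod lam ^ k * \<gamma> ^ k * (1 - t * (cmod lam)^2) powr \<gamma>))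
       \<and> (\<forall>(n::nat) (a::nat \<Rightarrow> complex). \<gamma> * cmod lam > bloch_norm g \<longrightarrow>
            cmod (\<Sum>k=0..n. a k * ((Tg g) ^^ k) (ftest \<gamma> lam) lam)
              \<le> cmod (a 0) * cmod lam / (1 - (cmod lam)^2) powr \<gamma>
                 + (\<Sum>k=1..n. cmod (a k)) * bloch_norm g
                     / (cmod lam * \<gamma> * (1 - (cmod lam)^2) powr \<gamma>))"
proof (intro conjI allI impI)
  fix k :: nat and t :: real
  assume "t \<in> {0..1}"
  from norm_funpow_Tg_ftest_radial_le[OF assms this, of k]
  show "cmod (((Tg g) ^^ k) (ftest \<gamma> lam) (of_real t * lam))
      \<le> bloch_norm g ^ k / (cmod lam ^ k * \<gamma> ^ k * (1 - t * (cmod lam)^2) powr \<gamma>)"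
    by (simp add: power_divide power_mult_distrib)
next
  fix n :: nat and a :: "nat \<Rightarrow> complex"
  assume "\<gamma> * cmod lam > bloch_norm g"
  define \<rho> where "\<rho> = bloch_norm g / (cmod lam * \<gamma>)"
  define M where "M = 1 / (1 - (cmod lam)^2) powr \<gamma>"
  have "0 \<le> \<rho>" "\<rho> \<le> 1"
    using \<open>\<gamma> * cmod lam > bloch_norm g\<close> bloch_norm_nonneg[OF assms(1)] assms(3,4)
    by (auto simp: \<rho>_def field_simps mult.commute)
  have "0 \<le> M"
    by (simp add: M_def)
  have "norm (((Tg g) ^^ k) (ftest \<gamma> lam) lam) \<le> \<rho> ^ k * M" for k
    using norm_funpow_Tg_ftest_radial_le[OF assms, of 1 k] by (simp add: \<rho>_def M_def)
  from norm_sum_le_first_plus_tail[OF this \<open>0 \<le> \<rho>\<close> \<open>\<rho> \<le> 1\<close> \<open>0 \<le> M\<close>]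
  show "cmod (\<Sum>k=0..n. a k * ((Tg g) ^^ k) (ftest \<gamma> lam) lam)
      \<le> cmod (a 0) * cmod lam / (1 - (cmod lam)^2) powr \<gamma>
         + (\<Sum>k=1..n. cmod (a k)) * bloch_norm g / (cmod lam * \<gamma> * (1 - (cmod lam)^2) powr \<gamma>)"
    using ftest_radial[of 1 lam \<gamma>] assms(2)
    by (simp add: M_def \<rho>_def norm_divide power_le_one)
qed

end
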